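(* Let $\alpha>0$. Consider the model $Y_i=f(x_i)+V_i^{1/2}\xi_i$, $i=1,\dots,n$, $x_i=i/n$, with $\xi_1,\dots,\xi_n\overset{iid}{\sim}N(0,1)$, $f\in\mathcal{H}_\alpha(M)$ and $V=(V_1,\dots,V_n)\in[0,M]^n$. Let $R_i=Y_{i+1}-Y_i$ ($1\le i\le n-1$), $S_i=Y_{i+3}-Y_i$ ($1\le i\le n-3$), and $$\hat T_1=\frac1n\sum_{i=1}^{n-3}\left(\tfrac13(R_{i+1}^4+S_i^4)-2R_{i+1}^2S_i^2\right).$$ With $W_i=V_{i+1}+V_i$, $\delta_i=f(x_{i+1})-f(x_i)$ and $$\tilde T_1=\frac1n\sum_{i=1}^{n-3}\big(W_{i+1}+\delta_{i+1}^2-V_i-V_{i+3}-(f(x_{i+3})-f(x_i))^2\big)^2,$$ we have $E_{f,V}\big(|\hat T_1-\tilde T_1|^2\big)\lesssim n^{-1}+n^{-8\alpha}$, with an implicit constant not depending on $n,f,V$.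
   Context: $\mathcal{H}_\alpha(M)$: functions $g:[0,1]\to\mathbb{R}$ with $|g^{(\lfloor\alpha\rfloor)}(x)-g^{(\lfloor\alpha\rfloor)}(y)|\le M|x-y|^{\alpha-\lfloor\alpha\rfloor}$ for all $x,y$ and $\|g^{(k)}\|_\infty\le M$ for $k=0,\dots,\lfloor\alpha\rfloor$; $M$ is a fixed sufficiently large constant. $E_{f,V}$ is expectation under the model. *)

theory Defs
  imports "HOL-Probability.Probability"
begin

text \<open>Hoelder class H_alpha(M) on [0,1]. D j plays the role of the j-th derivative
  g^(j) on [0,1] (one-sided at the endpoints), for j = 0..floor alpha.\<close>
definition holder_class :: "real \<Rightarrow> real \<Rightarrow> (real \<Rightarrow> real) \<Rightarrow> bool" where
  "holder_class \<alpha> M g \<longleftrightarrow>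
     (\<exists>D :: nat \<Rightarrow> real \<Rightarrow> real.
        (\<forall>x\<in>{0..1}. D 0 x = g x) \<and>
        (\<forall>j < nat \<lfloor>\<alpha>\<rfloor>. \<forall>x\<in>{0..1}.
            (D j has_real_derivative D (Suc j) x) (at x within {0..1})) \<and>
        (\<forall>j \<le> nat \<lfloor>\<alpha>\<rfloor>. \<forall>x\<in>{0..1}. \<bar>D j x\<bar> \<le> M) \<and>
        (\<forall>x\<in>{0..1}. \<forall>y\<in>{0..1}.
            \<bar>D (nat \<lfloor>\<alpha>\<rfloor>) x - D (nat \<lfloor>\<alpha>\<rfloor>) y\<bar> \<le> M * \<bar>x - y\<bar> powr (\<alpha> - of_int \<lfloor>\<alpha>\<rfloor>)))"

definition obsY :: "nat \<Rightarrow> (real \<Rightarrow> real) \<Rightarrow> (nat \<Rightarrow> real) \<Rightarrow> (nat \<Rightarrow> real) \<Rightarrow> nat \<Rightarrow> real" where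
  "obsY n f V \<xi> i = f (real i / real n) + sqrt (V i) * \<xi> i"

definition T1_hat :: "nat \<Rightarrow> (real \<Rightarrow> real) \<Rightarrow> (nat \<Rightarrow> real) \<Rightarrow> (nat \<Rightarrow> real) \<Rightarrow> real" where
  "T1_hat n f V \<xi> =
     (let Y = obsY n f V \<xi>;
          R = (\<lambda>i. Y (i + 1) - Y i);
          S = (\<lambda>i. Y (i + 3) - Y i)
      in (1 / real n) * (\<Sum>i = 1..n - 3.
            (1/3) * (R (i + 1) ^ 4 + S i ^ 4) - 2 * R (i + 1) ^ 2 * S i ^ 2))"

definition T1_tilde :: "nat \<Rightarrow> (real \<Rightarrow> real) \<Rightarrow> (nat \<Rightarrow> real) \<Rightarrow> real" where
  "T1_tilde n f V =
     (let x = (\<lambda>i. real i / real n);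
          W = (\<lambda>i. V (i + 1) + V i);
          \<delta> = (\<lambda>i. f (x (i + 1)) - f (x i))
      in (1 / real n) * (\<Sum>i = 1..n - 3.
            (W (i + 1) + \<delta> (i + 1) ^ 2 - V i - V (i + 3) - (f (x (i + 3)) - f (x i)) ^ 2) ^ 2))"

definition noise_law :: "nat \<Rightarrow> (nat \<Rightarrow> real) measure" where
  "noise_law n = PiM {1..n} (\<lambda>_. density lborel std_normal_density)"

end

(* Write R = R_{i+1} and S = S_i. These are Gaussian with means the drifts delta = f(x_{i+2}) - f(x_{i+1})
   and Delta = f(x_{i+3}) - f(x_i) and variances W_{i+1} and V_i + V_{i+3}, and they are independent
   because they involve the disjoint noise coordinates {i+1, i+2} and {i, i+3}. Gaussian fourth
   moments give
     E [(R^4 + S^4)/3 - 2 R^2 S^2] = (E R^2 - E S^2)^2 - 2/3 (delta^4 + Delta^4),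
   and (E R^2 - E S^2)^2 is exactly the i-th summand of T~_1. Hence T^_1 - T~_1 is an average of
   centred summands plus a bias. By the Hoelder condition the drifts are O(n^(-min alpha 1)), so the
   bias is O(n^(-4 min alpha 1)) and its square is O(1/n + n^(-8 alpha)). The i-th summand depends
   only on xi_i, ..., xi_{i+3}, so summands four or more apart are independent; thus the second moment
   of the sum of the n - 3 centred summands is at most 7 n times a uniform bound on a single second
   moment, which contributes O(1/n) after division by n^2. *)

theory Submission
  imports Defs
begin

definition has_moments :: "'a measure \<Rightarrow> ('a \<Rightarrow> real) \<Rightarrow> bool" where
  "has_moments M X \<longleftrightarrow> X \<in> borel_measurable M \<and> (\<forall>k. integrable M (\<lambda>x. \<bar>X x\<bar> ^ k))"

lemma has_moments_measurable: "has_moments M X \<Longrightarrow> X \<in> borel_measurable M"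
  by (simp add: has_moments_def)

lemma has_moments_integrable:
  assumes "has_moments M X" shows "integrable M X"
proof -
  have "X \<in> borel_measurable M" "integrable M (\<lambda>x. \<bar>X x\<bar> ^ 1)"
    using assms unfolding has_moments_def by blast+
  then show ?thesis by (simp add: integrable_abs_iff)
qed

lemma abs_add_power_le: "\<bar>x + y\<bar> ^ k \<le> 2 ^ k * (\<bar>x\<bar> ^ k + \<bar>y :: real\<bar> ^ k)"
proof -
  have "\<bar>x + y\<bar> ^ k \<le> (2 * max \<bar>x\<bar> \<bar>y\<bar>) ^ k"
    by (intro power_mono) auto
  also have "\<dots> \<le> 2 ^ k * (\<bar>x\<bar> ^ k + \<bar>y\<bar> ^ k)"
    by (cases "\<bar>x\<bar> \<le> \<bar>y\<bar>") (auto simp: max_def power_mult_distrib)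
  finally show ?thesis .
qed

lemma abs_mult_power_le: "\<bar>x * y\<bar> ^ k \<le> \<bar>x\<bar> ^ (2 * k) + \<bar>y :: real\<bar> ^ (2 * k)"
proof -
  have "0 \<le> \<bar>x\<bar> ^ k * \<bar>y\<bar> ^ k" by simp
  moreover have "2 * (\<bar>x\<bar> ^ k * \<bar>y\<bar> ^ k) \<le> (\<bar>x\<bar> ^ k)\<^sup>2 + (\<bar>y\<bar> ^ k)\<^sup>2"
    using sum_squares_bound[of "\<bar>x\<bar> ^ k" "\<bar>y\<bar> ^ k"] by (simp only: mult.assoc)
  ultimately have "\<bar>x\<bar> ^ k * \<bar>y\<bar> ^ k \<le> (\<bar>x\<bar> ^ k)\<^sup>2 + (\<bar>y\<bar> ^ k)\<^sup>2"
    by linarith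
  then show ?thesis
    by (simp add: abs_mult power_mult_distrib power_mult mult.commute[of 2])
qed

context finite_measure
begin

lemma has_moments_const [intro, simp]: "has_moments M (\<lambda>_. c)"
  by (simp add: has_moments_def)

lemma has_moments_add [intro]:
  assumes X: "has_moments M X" and Y: "has_moments M Y"
  shows "has_moments M (\<lambda>x. X x + Y x)"
  unfolding has_moments_def
proof safe
  note [measurable] = X[THEN has_moments_measurable] Y[THEN has_moments_measurable]
  show "(\<lambda>x. X x + Y x) \<in> borel_measurable M" by measurable
  fix k
  show "integrable M (\<lambda>x. \<bar>X x + Y x\<bar> ^ k)"
    by (rule Bochner_Integration.integrable_bound[where f = "\<lambda>x. 2 ^ k * (\<bar>X x\<bar> ^ k + \<bar>Y x\<bar> ^ k)"])
      (use X Y abs_add_power_le in \<open>auto simp: has_moments_def\<close>)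
qed

lemma has_moments_mult [intro]:
  assumes X: "has_moments M X" and Y: "has_moments M Y"
  shows "has_moments M (\<lambda>x. X x * Y x)"
  unfolding has_moments_def
proof safe
  note [measurable] = X[THEN has_moments_measurable] Y[THEN has_moments_measurable]
  show "(\<lambda>x. X x * Y x) \<in> borel_measurable M" by measurable
  fix k
  show "integrable M (\<lambda>x. \<bar>X x * Y x\<bar> ^ k)"
    by (rule Bochner_Integration.integrable_bound[where f = "\<lambda>x. \<bar>X x\<bar> ^ (2 * k) + \<bar>Y x\<bar> ^ (2 * k)"])
      (use X Y abs_mult_power_le in \<open>auto simp: has_moments_def\<close>)
qed

lemma has_moments_diff [intro]:
  assumes "has_moments M X" "has_moments M Y" shows "has_moments M (\<lambda>x. X x - Y x)"
proof -
  have "has_moments M (\<lambda>x. X x + (- 1) * Y x)"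
    by (intro has_moments_add has_moments_mult has_moments_const assms)
  then show ?thesis by simp
qed

lemma has_moments_power [intro]: "has_moments M X \<Longrightarrow> has_moments M (\<lambda>x. X x ^ k)"
  by (induction k) auto

lemma has_moments_sum [intro]:
  "(\<And>i. i \<in> I \<Longrightarrow> has_moments M (X i)) \<Longrightarrow> has_moments M (\<lambda>x. \<Sum>i\<in>I. X i x)"
  by (induction I rule: infinite_finite_induct) auto

end

section \<open>Moments of affine combinations of independent Gaussians\<close>

context prob_space
begin

lemma expectation_power_mult_indep:
  assumes "indep_var borel X borel Y" "has_moments M X" "has_moments M Y"
  shows "expectation (\<lambda>\<omega>. X \<omega> ^ p * Y \<omega> ^ q) = expectation (\<lambda>\<omega>. X \<omega> ^ p) * expectation (\<lambda>\<omega>. Y \<omega> ^ q)"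
  using assms
  by (intro indep_var_lebesgue_integral indep_var_compose[unfolded comp_def, OF assms(1)]
      has_moments_integrable has_moments_power) auto

lemma expectation_affine_power_indep:
  assumes indep: "indep_var borel X borel Y" and X: "has_moments M X" and Y: "has_moments M Y"
  shows "expectation (\<lambda>\<omega>. (c + a * X \<omega> + b * Y \<omega>) ^ n) =
    (\<Sum>k\<le>n. \<Sum>l\<le>k. real (n choose k) * real (k choose l) * c ^ (n - k) * a ^ l * b ^ (k - l) *
       (expectation (\<lambda>\<omega>. X \<omega> ^ l) * expectation (\<lambda>\<omega>. Y \<omega> ^ (k - l))))"
proof -
  have "(c + a * x + b * y) ^ n = (\<Sum>k\<le>n. \<Sum>l\<le>k. real (n choose k) * real (k choose l) *
      c ^ (n - k) * a ^ l * b ^ (k - l) * (x ^ l * y ^ (k - l)))" for x y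
  proof -
    have "(c + a * x + b * y) ^ n = (\<Sum>k\<le>n. real (n choose k) * (a * x + b * y) ^ k * c ^ (n - k))"
      using binomial_ring[of "a * x + b * y" c n] by (simp add: add_ac)
    also have "\<dots> = (\<Sum>k\<le>n. real (n choose k) * (\<Sum>l\<le>k. real (k choose l) * (a * x) ^ l * (b * y) ^ (k - l)) * c ^ (n - k))"
      by (simp only: binomial_ring)
    finally show ?thesis
      by (simp add: sum_distrib_left sum_distrib_right power_mult_distrib mult_ac)
  qed
  then show ?thesis
    using X Y
    by (simp add: Bochner_Integration.integral_sum has_moments_integrable has_moments_mult has_moments_power
        expectation_power_mult_indep[OF indep X Y])
qed

lemma std_normal_moment:
  assumes "distributed M lborel X std_normal_density"
  shows "expectation (\<lambda>\<omega>. X \<omega> ^ k) = (if odd k then 0 else fact k / (2 ^ (k div 2) * fact (k div 2)))"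
proof -
  have "expectation (\<lambda>\<omega>. X \<omega> ^ k) = (\<integral>x. std_normal_density x * x ^ k \<partial>lborel)"
    by (rule distributed_integral[OF assms, symmetric]) auto
  also have "\<dots> = (if odd k then 0 else fact k / (2 ^ (k div 2) * fact (k div 2)))"
  proof (cases "even k")
    case True
    then obtain j where "k = 2 * j" by blast
    then show ?thesis by (simp add: integral_std_normal_moment_even)
  next
    case False
    then obtain j where "k = 2 * j + 1" by (blast elim: oddE)
    then show ?thesis using integral_std_normal_moment_odd[of j] by simp
  qed
  finally show ?thesis .
qed

lemma has_moments_std_normal:
  assumes "distributed M lborel X std_normal_density"
  shows "has_moments M X"
  unfolding has_moments_def
  using distributed_integrable[OF assms, of "\<lambda>x. \<bar>x\<bar> ^ _"] integrable_std_normal_moment_abs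
    distributed_measurable[OF assms]
  by auto

context
  fixes X Y :: "'a \<Rightarrow> real"
  assumes indep: "indep_var borel X borel Y"
    and X: "distributed M lborel X std_normal_density"
    and Y: "distributed M lborel Y std_normal_density"
begin

lemma std_normal_affine_second_moment:
  "expectation (\<lambda>\<omega>. (c + a * X \<omega> + b * Y \<omega>) ^ 2) = c\<^sup>2 + a\<^sup>2 + b\<^sup>2"
  by (simp add: expectation_affine_power_indep[OF indep has_moments_std_normal[OF X] has_moments_std_normal[OF Y]]
      std_normal_moment[OF X] std_normal_moment[OF Y] atMost_nat_numeral)

lemma std_normal_affine_fourth_moment:
  "expectation (\<lambda>\<omega>. (c + a * X \<omega> + b * Y \<omega>) ^ 4) = c ^ 4 + 6 * c\<^sup>2 * (a\<^sup>2 + b\<^sup>2) + 3 * (a\<^sup>2 + b\<^sup>2)\<^sup>2"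
  by (subst expectation_affine_power_indep[OF indep has_moments_std_normal[OF X] has_moments_std_normal[OF Y]],
      simp add: std_normal_moment[OF X] std_normal_moment[OF Y] atMost_nat_numeral fact_numeral binomial_fact,
      algebra)

end

end

section \<open>Coordinates of product measures and of the noise law\<close>

lemma indep_vars_PiM_components:
  assumes I: "finite I" and M: "\<And>i. i \<in> I \<Longrightarrow> prob_space (M i)"
  shows "prob_space.indep_vars (PiM I M) M (\<lambda>i \<omega>. \<omega> i) I"
proof -
  interpret P: prob_space "PiM I M" by (rule prob_space_PiM[OF M])
  show ?thesis
  proof (cases "I = {}")
    case True
    then show ?thesis unfolding P.indep_vars_def P.indep_sets_def by simp
  next
    case False
    have "distr (PiM I M) (PiM I M) (\<lambda>\<omega>. restrict \<omega> I) = distr (PiM I M) (PiM I M) (\<lambda>\<omega>. \<omega>)"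
      by (intro distr_cong) (auto simp: space_PiM)
    also have "\<dots> = PiM I M"
      by (rule distr_id)
    also have "\<dots> = PiM I (\<lambda>i. distr (PiM I M) (M i) (\<lambda>\<omega>. \<omega> i))"
      by (intro PiM_cong refl distr_PiM_component[where I = I and M = M, OF M, symmetric])
    finally show ?thesis
      using False by (subst P.indep_vars_iff_distr_eq_PiM') auto
  qed
qed

lemma integral_PiM_mult_disjoint_blocks:
  fixes X Y :: "('i \<Rightarrow> 'a) \<Rightarrow> real"
  assumes I: "finite I" and M: "\<And>i. i \<in> I \<Longrightarrow> prob_space (M i)"
    and AB: "A \<subseteq> I" "B \<subseteq> I" "A \<inter> B = {}"
    and X: "X \<in> borel_measurable (PiM A M)" "\<And>\<omega>. X (restrict \<omega> A) = X \<omega>"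
    and Y: "Y \<in> borel_measurable (PiM B M)" "\<And>\<omega>. Y (restrict \<omega> B) = Y \<omega>"
    and int: "integrable (PiM I M) X" "integrable (PiM I M) Y"
  shows "(\<integral>\<omega>. X \<omega> * Y \<omega> \<partial>PiM I M) = (\<integral>\<omega>. X \<omega> \<partial>PiM I M) * (\<integral>\<omega>. Y \<omega> \<partial>PiM I M)"
proof -
  interpret P: prob_space "PiM I M" by (rule prob_space_PiM[OF M])
  have "P.indep_var (PiM A M) (\<lambda>\<omega>. restrict \<omega> A) (PiM B M) (\<lambda>\<omega>. restrict \<omega> B)"
    using P.indep_var_restrict[OF indep_vars_PiM_components[OF I M] AB(3,1,2)] by simp
  then have "P.indep_var borel (X \<circ> (\<lambda>\<omega>. restrict \<omega> A)) borel (Y \<circ> (\<lambda>\<omega>. restrict \<omega> B))"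
    using X(1) Y(1) by (rule P.indep_var_compose)
  then have "P.indep_var borel X borel Y"
    by (simp add: comp_def X(2) Y(2))
  then show ?thesis
    using int by (rule P.indep_var_lebesgue_integral)
qed

lemma indep_var_PiM_components:
  assumes I: "finite I" and M: "\<And>i. i \<in> I \<Longrightarrow> prob_space (M i)"
    and ij: "i \<in> I" "j \<in> I" "i \<noteq> j"
  shows "prob_space.indep_var (PiM I M) (M i) (\<lambda>\<omega>. \<omega> i) (M j) (\<lambda>\<omega>. \<omega> j)"
proof -
  interpret P: prob_space "PiM I M" by (rule prob_space_PiM[OF M])
  have "P.indep_var (PiM {i} M) (\<lambda>\<omega>. restrict \<omega> {i}) (PiM {j} M) (\<lambda>\<omega>. restrict \<omega> {j})"
    using P.indep_var_restrict[OF indep_vars_PiM_components[OF I M], of "{i}" "{j}"] ij by simp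
  then have "P.indep_var (M i) ((\<lambda>\<omega>. \<omega> i) \<circ> (\<lambda>\<omega>. restrict \<omega> {i})) (M j) ((\<lambda>\<omega>. \<omega> j) \<circ> (\<lambda>\<omega>. restrict \<omega> {j}))"
    by (rule P.indep_var_compose) (auto intro: measurable_component_singleton)
  then show ?thesis by (simp add: comp_def)
qed

abbreviation std_normal :: "real measure" where
  "std_normal \<equiv> density lborel std_normal_density"

lemma prob_space_std_normal: "prob_space std_normal"
  by (rule prob_space_normal_density) simp

lemma prob_space_noise_law: "prob_space (noise_law n)"
  unfolding noise_law_def by (intro prob_space_PiM prob_space_std_normal)

lemma measurable_std_normal_component:
  "j \<in> A \<Longrightarrow> (\<lambda>\<omega>. \<omega> j) \<in> borel_measurable (PiM A (\<lambda>_. std_normal))"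
  using measurable_component_singleton[of j A "\<lambda>_. std_normal"] by (simp cong: measurable_cong_sets)

lemma distributed_noise_component:
  assumes "j \<in> {1..n}"
  shows "distributed (noise_law n) lborel (\<lambda>\<xi>. \<xi> j) std_normal_density"
proof -
  have "distr (noise_law n) lborel (\<lambda>\<xi>. \<xi> j) = distr (noise_law n) std_normal (\<lambda>\<xi>. \<xi> j)"
    by (intro distr_cong) auto
  also have "\<dots> = std_normal"
    unfolding noise_law_def using assms by (intro distr_PiM_component prob_space_std_normal)
  finally show ?thesis
    using assms unfolding distributed_def noise_law_def
    by (auto intro: measurable_std_normal_component)
qed

lemma indep_var_noise_components:
  assumes "j \<in> {1..n}" "k \<in> {1..n}" "j \<noteq> k"
  shows "prob_space.indep_var (noise_law n) borel (\<lambda>\<xi>. \<xi> j) borel (\<lambda>\<xi>. \<xi> k)"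
proof -
  interpret P: prob_space "noise_law n" by (rule prob_space_noise_law)
  have "P.indep_var std_normal (\<lambda>\<xi>. \<xi> j) std_normal (\<lambda>\<xi>. \<xi> k)"
    unfolding noise_law_def using assms
    by (intro indep_var_PiM_components prob_space_std_normal) auto
  then have "P.indep_var borel ((\<lambda>x. x) \<circ> (\<lambda>\<xi>. \<xi> j)) borel ((\<lambda>x. x) \<circ> (\<lambda>\<xi>. \<xi> k))"
    by (rule P.indep_var_compose) (simp_all cong: measurable_cong_sets)
  then show ?thesis by (simp add: comp_def)
qed

lemma integral_noise_law_mult_disjoint_blocks:
  fixes X Y :: "(nat \<Rightarrow> real) \<Rightarrow> real"
  assumes "A \<subseteq> {1..n}" "B \<subseteq> {1..n}" "A \<inter> B = {}"
    and "X \<in> borel_measurable (PiM A (\<lambda>_. std_normal))" "\<And>\<xi>. X (restrict \<xi> A) = X \<xi>"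
    and "Y \<in> borel_measurable (PiM B (\<lambda>_. std_normal))" "\<And>\<xi>. Y (restrict \<xi> B) = Y \<xi>"
    and "integrable (noise_law n) X" "integrable (noise_law n) Y"
  shows "(\<integral>\<xi>. X \<xi> * Y \<xi> \<partial>noise_law n) = (\<integral>\<xi>. X \<xi> \<partial>noise_law n) * (\<integral>\<xi>. Y \<xi> \<partial>noise_law n)"
  using assms unfolding noise_law_def
  by (intro integral_PiM_mult_disjoint_blocks prob_space_std_normal) auto

lemma has_moments_noise_component: "j \<in> {1..n} \<Longrightarrow> has_moments (noise_law n) (\<lambda>\<xi>. \<xi> j)"
  using prob_space.has_moments_std_normal[OF prob_space_noise_law distributed_noise_component] .

section \<open>The summands of the two statistics\<close>

definition drift :: "nat \<Rightarrow> (real \<Rightarrow> real) \<Rightarrow> nat \<Rightarrow> nat \<Rightarrow> real" where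
  "drift n f k i = f (real (i + k) / real n) - f (real i / real n)"

text \<open>In the notation of the paper R_{i+1} = increment n f V 1 (i + 1) and S_i = increment n f V 3 i.\<close>

definition increment :: "nat \<Rightarrow> (real \<Rightarrow> real) \<Rightarrow> (nat \<Rightarrow> real) \<Rightarrow> nat \<Rightarrow> nat \<Rightarrow> (nat \<Rightarrow> real) \<Rightarrow> real" where
  "increment n f V k i \<xi> = obsY n f V \<xi> (i + k) - obsY n f V \<xi> i"

lemma increment_eq:
  "increment n f V k i \<xi> = drift n f k i + sqrt (V (i + k)) * \<xi> (i + k) + (- sqrt (V i)) * \<xi> i"
  by (simp add: increment_def drift_def obsY_def)

lemma increment_restrict:
  "{i, i + k} \<subseteq> A \<Longrightarrow> increment n f V k i (restrict \<xi> A) = increment n f V k i \<xi>"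
  by (simp add: increment_eq)

lemma measurable_increment:
  "{i, i + k} \<subseteq> A \<Longrightarrow> increment n f V k i \<in> borel_measurable (PiM A (\<lambda>_. std_normal))"
  unfolding increment_eq by (auto intro!: borel_measurable_add borel_measurable_times measurable_std_normal_component)

lemma has_moments_increment:
  assumes "1 \<le> i" "i + k \<le> n"
  shows "has_moments (noise_law n) (increment n f V k i)"
proof -
  interpret prob_space "noise_law n" by (rule prob_space_noise_law)
  show ?thesis
    unfolding increment_eq using assms by (intro has_moments_add has_moments_mult has_moments_noise_component) auto
qed

context
  fixes n k i :: nat and f :: "real \<Rightarrow> real" and V :: "nat \<Rightarrow> real"
  assumes i: "1 \<le> i" "i + k \<le> n" "0 < k" and V: "0 \<le> V i" "0 \<le> V (i + k)"
begin

lemma increment_second_moment: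
  "(\<integral>\<xi>. increment n f V k i \<xi> ^ 2 \<partial>noise_law n) = drift n f k i ^ 2 + (V (i + k) + V i)"
proof -
  interpret prob_space "noise_law n" by (rule prob_space_noise_law)
  have "i + k \<in> {1..n}" "i \<in> {1..n}" "i + k \<noteq> i" using i by auto
  note std_normal_affine_second_moment[OF indep_var_noise_components[OF this]
      distributed_noise_component[OF this(1)] distributed_noise_component[OF this(2)],
      of "drift n f k i" "sqrt (V (i + k))" "- sqrt (V i)"]
  then show ?thesis using V by (simp add: increment_eq)
qed

lemma increment_fourth_moment:
  "(\<integral>\<xi>. increment n f V k i \<xi> ^ 4 \<partial>noise_law n) =
    drift n f k i ^ 4 + 6 * drift n f k i ^ 2 * (V (i + k) + V i) + 3 * (V (i + k) + V i)\<^sup>2"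
proof -
  interpret prob_space "noise_law n" by (rule prob_space_noise_law)
  have "i + k \<in> {1..n}" "i \<in> {1..n}" "i + k \<noteq> i" using i by auto
  note std_normal_affine_fourth_moment[OF indep_var_noise_components[OF this]
      distributed_noise_component[OF this(1)] distributed_noise_component[OF this(2)],
      of "drift n f k i" "sqrt (V (i + k))" "- sqrt (V i)"]
  then show ?thesis using V by (simp add: increment_eq)
qed

end

definition T1_hat_term :: "nat \<Rightarrow> (real \<Rightarrow> real) \<Rightarrow> (nat \<Rightarrow> real) \<Rightarrow> nat \<Rightarrow> (nat \<Rightarrow> real) \<Rightarrow> real" where
  "T1_hat_term n f V i \<xi> =
     (1/3) * (increment n f V 1 (i + 1) \<xi> ^ 4 + increment n f V 3 i \<xi> ^ 4)
     - 2 * increment n f V 1 (i + 1) \<xi> ^ 2 * increment n f V 3 i \<xi> ^ 2"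

text \<open>This is (E R_{i+1}^2 - E S_i^2)^2, see increment_second_moment.\<close>

definition T1_tilde_term :: "nat \<Rightarrow> (real \<Rightarrow> real) \<Rightarrow> (nat \<Rightarrow> real) \<Rightarrow> nat \<Rightarrow> real" where
  "T1_tilde_term n f V i =
     (drift n f 1 (i + 1) ^ 2 + (V (i + 2) + V (i + 1)) - (drift n f 3 i ^ 2 + (V (i + 3) + V i)))\<^sup>2"

lemma T1_hat_eq_sum: "T1_hat n f V \<xi> = (1 / real n) * (\<Sum>i = 1..n - 3. T1_hat_term n f V i \<xi>)"
  by (simp add: T1_hat_def T1_hat_term_def increment_def Let_def)

lemma T1_tilde_eq_sum: "T1_tilde n f V = (1 / real n) * (\<Sum>i = 1..n - 3. T1_tilde_term n f V i)"
  unfolding T1_tilde_def T1_tilde_term_def drift_def Let_def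
  by (intro arg_cong2[where f = "(*)"] sum.cong) (simp_all add: algebra_simps)

lemma has_moments_T1_hat_term:
  assumes "1 \<le> i" "i + 3 \<le> n"
  shows "has_moments (noise_law n) (T1_hat_term n f V i)"
proof -
  interpret prob_space "noise_law n" by (rule prob_space_noise_law)
  show ?thesis
    unfolding T1_hat_term_def using assms
    by (intro has_moments_diff has_moments_add has_moments_mult has_moments_power has_moments_increment has_moments_const) auto
qed

lemma T1_hat_term_restrict: "T1_hat_term n f V i (restrict \<xi> {i..i + 3}) = T1_hat_term n f V i \<xi>"
  by (simp add: T1_hat_term_def increment_restrict)

lemma measurable_T1_hat_term: "T1_hat_term n f V i \<in> borel_measurable (PiM {i..i + 3} (\<lambda>_. std_normal))"
  unfolding T1_hat_term_def by (intro borel_measurable_diff borel_measurable_add borel_measurable_times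
      borel_measurable_power measurable_increment borel_measurable_const) auto

lemma expectation_T1_hat_term:
  assumes i: "1 \<le> i" "i + 3 \<le> n" and V: "\<forall>j\<in>{1..n}. 0 \<le> V j"
  shows "(\<integral>\<xi>. T1_hat_term n f V i \<xi> \<partial>noise_law n) =
    T1_tilde_term n f V i - 2/3 * (drift n f 1 (i + 1) ^ 4 + drift n f 3 i ^ 4)"
proof -
  interpret prob_space "noise_law n" by (rule prob_space_noise_law)
  let ?R = "increment n f V 1 (i + 1)" and ?S = "increment n f V 3 i"
  have R: "has_moments (noise_law n) ?R" and S: "has_moments (noise_law n) ?S"
    using i by (auto intro: has_moments_increment)
  have "expectation (\<lambda>\<xi>. ?R \<xi> ^ 2 * ?S \<xi> ^ 2) = expectation (\<lambda>\<xi>. ?R \<xi> ^ 2) * expectation (\<lambda>\<xi>. ?S \<xi> ^ 2)"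
  proof (rule integral_noise_law_mult_disjoint_blocks[where A = "{i + 1, i + 2}" and B = "{i, i + 3}"])
    show "(\<lambda>\<xi>. ?R \<xi> ^ 2) \<in> borel_measurable (PiM {i + 1, i + 2} (\<lambda>_. std_normal))"
      by (intro borel_measurable_power measurable_increment) auto
    show "(\<lambda>\<xi>. ?S \<xi> ^ 2) \<in> borel_measurable (PiM {i, i + 3} (\<lambda>_. std_normal))"
      by (intro borel_measurable_power measurable_increment) auto
  qed (use i R S in \<open>auto simp: increment_restrict intro: has_moments_integrable\<close>)
  moreover have "expectation (T1_hat_term n f V i) = (1/3) * (expectation (\<lambda>\<xi>. ?R \<xi> ^ 4) + expectation (\<lambda>\<xi>. ?S \<xi> ^ 4))
      - 2 * expectation (\<lambda>\<xi>. ?R \<xi> ^ 2 * ?S \<xi> ^ 2)"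
    unfolding T1_hat_term_def using R S
    by (simp add: has_moments_integrable has_moments_power has_moments_mult mult.assoc)
  moreover have "expectation (\<lambda>\<xi>. ?R \<xi> ^ 2) = drift n f 1 (i + 1) ^ 2 + (V (i + 2) + V (i + 1))"
    "expectation (\<lambda>\<xi>. ?R \<xi> ^ 4) = drift n f 1 (i + 1) ^ 4 + 6 * drift n f 1 (i + 1) ^ 2 * (V (i + 2) + V (i + 1))
      + 3 * (V (i + 2) + V (i + 1))\<^sup>2"
    using increment_second_moment[of "i + 1" 1 n V f] increment_fourth_moment[of "i + 1" 1 n V f] i V
    by (simp_all add: numeral_2_eq_2)
  moreover have "expectation (\<lambda>\<xi>. ?S \<xi> ^ 2) = drift n f 3 i ^ 2 + (V (i + 3) + V i)"
    "expectation (\<lambda>\<xi>. ?S \<xi> ^ 4) = drift n f 3 i ^ 4 + 6 * drift n f 3 i ^ 2 * (V (i + 3) + V i)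
      + 3 * (V (i + 3) + V i)\<^sup>2"
    using increment_second_moment[of i 3 n V f] increment_fourth_moment[of i 3 n V f] i V by simp_all
  ultimately show ?thesis
    unfolding T1_tilde_term_def by algebra
qed

section \<open>Second moments\<close>

lemma card_near_le: "card {j \<in> I. j < i + m \<and> i < j + m} \<le> 2 * m - 1"
proof -
  have "card {j \<in> I. j < i + m \<and> i < j + m} \<le> card {i + 1 - m..<i + m}"
    by (intro card_mono) auto
  then show ?thesis by simp
qed

lemma (in prob_space) expectation_mult_le_second_moments:
  assumes X: "has_moments M X" and Y: "has_moments M Y"
  shows "2 * expectation (\<lambda>\<omega>. X \<omega> * Y \<omega>) \<le> expectation (\<lambda>\<omega>. X \<omega> ^ 2) + expectation (\<lambda>\<omega>. Y \<omega> ^ 2)"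
proof -
  have "expectation (\<lambda>\<omega>. 2 * X \<omega> * Y \<omega>) \<le> expectation (\<lambda>\<omega>. (X \<omega>)\<^sup>2 + (Y \<omega>)\<^sup>2)"
    by (intro integral_mono has_moments_integrable has_moments_mult has_moments_add has_moments_power
        has_moments_const sum_squares_bound X Y)
  then show ?thesis
    using X Y by (simp add: has_moments_integrable has_moments_power has_moments_mult mult.assoc)
qed

lemma (in prob_space) expectation_square_sum_le_of_uncorrelated_far:
  fixes Z :: "nat \<Rightarrow> 'a \<Rightarrow> real"
  assumes I: "finite I" and Z: "\<And>i. i \<in> I \<Longrightarrow> has_moments M (Z i)"
    and far: "\<And>i j. i \<in> I \<Longrightarrow> j \<in> I \<Longrightarrow> i + m \<le> j \<Longrightarrow> expectation (\<lambda>\<omega>. Z i \<omega> * Z j \<omega>) = 0"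
    and K: "\<And>i. i \<in> I \<Longrightarrow> expectation (\<lambda>\<omega>. Z i \<omega> ^ 2) \<le> K"
  shows "expectation (\<lambda>\<omega>. (\<Sum>i\<in>I. Z i \<omega>)\<^sup>2) \<le> real (2 * m - 1) * real (card I) * K"
proof (cases "I = {}")
  case False
  then obtain i0 where "i0 \<in> I" by blast
  have "0 \<le> expectation (\<lambda>\<omega>. Z i0 \<omega> ^ 2)"
    by (rule integral_nonneg_AE) simp
  then have K0: "0 \<le> K"
    using K[OF \<open>i0 \<in> I\<close>] by linarith
  let ?near = "\<lambda>i j. j < i + m \<and> i < j + m"
  have pair: "expectation (\<lambda>\<omega>. Z i \<omega> * Z j \<omega>) \<le> (if ?near i j then K else 0)"
    if ij: "i \<in> I" "j \<in> I" for i j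
  proof (cases "?near i j")
    case True
    then have "expectation (\<lambda>\<omega>. Z i \<omega> * Z j \<omega>) \<le> K"
      using expectation_mult_le_second_moments[OF Z[OF ij(1)] Z[OF ij(2)]] K[OF ij(1)] K[OF ij(2)]
      by linarith
    then show ?thesis using True by simp
  next
    case False
    then have "i + m \<le> j \<or> j + m \<le> i" by auto
    then show ?thesis
      using far[OF ij] far[OF ij(2,1)] False by (auto simp: mult.commute)
  qed
  have "expectation (\<lambda>\<omega>. (\<Sum>i\<in>I. Z i \<omega>)\<^sup>2) = (\<Sum>i\<in>I. \<Sum>j\<in>I. expectation (\<lambda>\<omega>. Z i \<omega> * Z j \<omega>))"
    using Z by (simp add: power2_eq_square sum_product has_moments_integrable has_moments_mult)
  also have "\<dots> \<le> (\<Sum>i\<in>I. \<Sum>j\<in>I. if ?near i j then K else 0)"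
    by (intro sum_mono pair)
  also have "\<dots> = (\<Sum>i\<in>I. real (card {j \<in> I. ?near i j}) * K)"
    using I by (intro sum.cong refl) (simp add: sum.inter_filter[symmetric])
  also have "\<dots> \<le> (\<Sum>i\<in>I. real (2 * m - 1) * K)"
    using K0 card_near_le[of I] by (intro sum_mono mult_right_mono) (auto simp del: of_nat_diff)
  finally show ?thesis by (simp add: mult_ac)
qed simp

lemma contrast_square_le: "((1/3) * (r ^ 4 + s ^ 4) - 2 * r\<^sup>2 * s\<^sup>2)\<^sup>2 \<le> 2 * (r ^ 8 + (s :: real) ^ 8)"
proof -
  have abs_le: "\<bar>(1/3) * p - 2 * c\<bar> \<le> p" if "0 \<le> c" "2 * c \<le> p" for p c :: real
    using that by (simp add: abs_le_iff)
  have "2 * (r\<^sup>2 * s\<^sup>2) \<le> r ^ 4 + s ^ 4"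
    using sum_squares_bound[of "r\<^sup>2" "s\<^sup>2"] by (simp add: mult.assoc flip: power_mult)
  then have "\<bar>(1/3) * (r ^ 4 + s ^ 4) - 2 * r\<^sup>2 * s\<^sup>2\<bar> \<le> r ^ 4 + s ^ 4"
    using abs_le[of "r\<^sup>2 * s\<^sup>2" "r ^ 4 + s ^ 4"] by (simp add: mult.assoc)
  then have "((1/3) * (r ^ 4 + s ^ 4) - 2 * r\<^sup>2 * s\<^sup>2)\<^sup>2 \<le> (r ^ 4 + s ^ 4)\<^sup>2"
    by (subst power2_le_iff_abs_le) auto
  also have "\<dots> \<le> 2 * (r ^ 8 + s ^ 8)"
    using sum_squares_bound[of "r ^ 4" "s ^ 4"] by (simp add: power2_sum flip: power_mult)
  finally show ?thesis .
qed

lemma (in prob_space) std_normal_affine_eighth_moment_le: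
  assumes X: "distributed M lborel X std_normal_density" and Y: "distributed M lborel Y std_normal_density"
  shows "expectation (\<lambda>\<omega>. (c + a * X \<omega> + b * Y \<omega>) ^ 8) \<le> 2 ^ 16 * (c ^ 8 + 105 * (a ^ 8 + b ^ 8))"
proof -
  have "(c + a * x + b * y) ^ 8 \<le> 2 ^ 16 * (c ^ 8 + a ^ 8 * x ^ 8 + b ^ 8 * y ^ 8)" for x y
  proof -
    have "(c + a * x + b * y) ^ 8 = \<bar>c + (a * x + b * y)\<bar> ^ 8"
      by (simp add: add.assoc)
    also have "\<dots> \<le> 2 ^ 8 * (\<bar>c\<bar> ^ 8 + 2 ^ 8 * (\<bar>a * x\<bar> ^ 8 + \<bar>b * y\<bar> ^ 8))"
      using abs_add_power_le[of c "a * x + b * y" 8] abs_add_power_le[of "a * x" "b * y" 8] by simp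
    also have "\<dots> \<le> 2 ^ 16 * (c ^ 8 + a ^ 8 * x ^ 8 + b ^ 8 * y ^ 8)"
      by (simp add: algebra_simps)
    finally show ?thesis .
  qed
  then have "expectation (\<lambda>\<omega>. (c + a * X \<omega> + b * Y \<omega>) ^ 8)
      \<le> expectation (\<lambda>\<omega>. 2 ^ 16 * (c ^ 8 + a ^ 8 * X \<omega> ^ 8 + b ^ 8 * Y \<omega> ^ 8))"
    by (intro integral_mono has_moments_integrable has_moments_add has_moments_mult has_moments_power
        has_moments_const has_moments_std_normal[OF X] has_moments_std_normal[OF Y]) auto
  also have "\<dots> = 2 ^ 16 * (c ^ 8 + a ^ 8 * 105 + b ^ 8 * 105)"
    using has_moments_std_normal[OF X] has_moments_std_normal[OF Y]
    by (simp add: has_moments_integrable has_moments_power std_normal_moment[OF X] std_normal_moment[OF Y]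
        prob_space fact_numeral)
  finally show ?thesis by (simp add: algebra_simps)
qed

lemma abs_drift_le:
  assumes f: "\<forall>x\<in>{0..1}. \<bar>f x\<bar> \<le> M" and "i + k \<le> n"
  shows "\<bar>drift n f k i\<bar> \<le> 2 * M"
proof -
  have "\<bar>f (real j / real n)\<bar> \<le> M" if "j \<le> n" for j
    using f that by (auto simp: divide_le_eq_1)
  from this[of "i + k"] this[of i] show ?thesis
    unfolding drift_def using assms(2) by linarith
qed

lemma increment_eighth_moment_le:
  assumes i: "1 \<le> i" "i + k \<le> n" "0 < k" and f: "\<forall>x\<in>{0..1}. \<bar>f x\<bar> \<le> M"
    and V: "\<forall>j\<in>{1..n}. 0 \<le> V j \<and> V j \<le> M"
  shows "(\<integral>\<xi>. increment n f V k i \<xi> ^ 8 \<partial>noise_law n) \<le> 2 ^ 16 * (2 ^ 8 * M ^ 8 + 210 * M ^ 4)"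
proof -
  interpret prob_space "noise_law n" by (rule prob_space_noise_law)
  have ik: "i + k \<in> {1..n}" "i \<in> {1..n}" using i by auto
  have "expectation (\<lambda>\<xi>. increment n f V k i \<xi> ^ 8)
      \<le> 2 ^ 16 * (drift n f k i ^ 8 + 105 * (sqrt (V (i + k)) ^ 8 + (- sqrt (V i)) ^ 8))"
    unfolding increment_eq
    by (rule std_normal_affine_eighth_moment_le[OF distributed_noise_component[OF ik(1)]
          distributed_noise_component[OF ik(2)]])
  also have "\<dots> = 2 ^ 16 * (drift n f k i ^ 8 + 105 * (V (i + k) ^ 4 + V i ^ 4))"
    using V ik power_mult[of "sqrt (V (i + k))" 2 4] power_mult[of "sqrt (V i)" 2 4] by simp
  also have "\<dots> \<le> 2 ^ 16 * ((2 * M) ^ 8 + 105 * (M ^ 4 + M ^ 4))"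
  proof -
    have "drift n f k i ^ 8 \<le> (2 * M) ^ 8"
      using power_mono[OF abs_drift_le[OF f i(2)], of 8] by simp
    moreover have "V (i + k) ^ 4 \<le> M ^ 4" "V i ^ 4 \<le> M ^ 4"
      using V ik by (auto intro: power_mono)
    ultimately show ?thesis by simp
  qed
  finally show ?thesis by (simp add: power_mult_distrib)
qed

text \<open>Twice the sum of the bounds on E R_{i+1}^8 and E S_i^8.\<close>

definition T1_moment_bound :: "real \<Rightarrow> real" where
  "T1_moment_bound M = 2 ^ 18 * (2 ^ 8 * M ^ 8 + 210 * M ^ 4)"

lemma T1_hat_term_second_moment_le:
  assumes i: "1 \<le> i" "i + 3 \<le> n" and f: "\<forall>x\<in>{0..1}. \<bar>f x\<bar> \<le> M"
    and V: "\<forall>j\<in>{1..n}. 0 \<le> V j \<and> V j \<le> M"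
  shows "(\<integral>\<xi>. T1_hat_term n f V i \<xi> ^ 2 \<partial>noise_law n) \<le> T1_moment_bound M"
proof -
  interpret prob_space "noise_law n" by (rule prob_space_noise_law)
  let ?R = "increment n f V 1 (i + 1)" and ?S = "increment n f V 3 i"
  have R: "has_moments (noise_law n) ?R" and S: "has_moments (noise_law n) ?S"
    using i by (auto intro: has_moments_increment)
  have "expectation (\<lambda>\<xi>. T1_hat_term n f V i \<xi> ^ 2) \<le> expectation (\<lambda>\<xi>. 2 * (?R \<xi> ^ 8 + ?S \<xi> ^ 8))"
    by (intro integral_mono has_moments_integrable has_moments_power has_moments_mult has_moments_add
        has_moments_const has_moments_T1_hat_term[OF i] R S) (simp only: T1_hat_term_def contrast_square_le)
  also have "\<dots> = 2 * (expectation (\<lambda>\<xi>. ?R \<xi> ^ 8) + expectation (\<lambda>\<xi>. ?S \<xi> ^ 8))"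
    using R S by (simp add: has_moments_integrable has_moments_power)
  also have "\<dots> \<le> 2 * (2 ^ 16 * (2 ^ 8 * M ^ 8 + 210 * M ^ 4) + 2 ^ 16 * (2 ^ 8 * M ^ 8 + 210 * M ^ 4))"
    using i f V by (intro mult_left_mono add_mono increment_eighth_moment_le) auto
  finally show ?thesis by (simp add: T1_moment_bound_def)
qed

definition centred_T1_hat_term :: "nat \<Rightarrow> (real \<Rightarrow> real) \<Rightarrow> (nat \<Rightarrow> real) \<Rightarrow> nat \<Rightarrow> (nat \<Rightarrow> real) \<Rightarrow> real" where
  "centred_T1_hat_term n f V i \<xi> = T1_hat_term n f V i \<xi> - (\<integral>\<xi>. T1_hat_term n f V i \<xi> \<partial>noise_law n)"

lemma has_moments_centred_T1_hat_term:
  "1 \<le> i \<Longrightarrow> i + 3 \<le> n \<Longrightarrow> has_moments (noise_law n) (centred_T1_hat_term n f V i)"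
  unfolding centred_T1_hat_term_def
  by (intro finite_measure.has_moments_diff finite_measure.has_moments_const has_moments_T1_hat_term
      prob_space.finite_measure prob_space_noise_law)

lemma centred_T1_hat_terms_uncorrelated_far:
  assumes "1 \<le> i" "i + 4 \<le> j" "j + 3 \<le> n"
  shows "(\<integral>\<xi>. centred_T1_hat_term n f V i \<xi> * centred_T1_hat_term n f V j \<xi> \<partial>noise_law n) = 0"
proof -
  interpret prob_space "noise_law n" by (rule prob_space_noise_law)
  let ?Z = "centred_T1_hat_term n f V"
  have meas: "?Z k \<in> borel_measurable (PiM {k..k + 3} (\<lambda>_. std_normal))" for k
    unfolding centred_T1_hat_term_def
    by (intro borel_measurable_diff measurable_T1_hat_term borel_measurable_const)
  have restr: "?Z k (restrict \<xi> {k..k + 3}) = ?Z k \<xi>" for k \<xi>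
    by (simp add: centred_T1_hat_term_def T1_hat_term_restrict)
  have "expectation (\<lambda>\<xi>. ?Z i \<xi> * ?Z j \<xi>) = expectation (?Z i) * expectation (?Z j)"
    using assms
    by (intro integral_noise_law_mult_disjoint_blocks[where A = "{i..i + 3}" and B = "{j..j + 3}"]
        meas restr has_moments_integrable has_moments_centred_T1_hat_term) auto
  moreover have "expectation (?Z i) = 0"
    using assms has_moments_T1_hat_term[of i n f V]
    by (simp add: centred_T1_hat_term_def[abs_def] has_moments_integrable prob_space)
  ultimately show ?thesis by simp
qed

lemma centred_T1_hat_term_second_moment_le:
  assumes i: "1 \<le> i" "i + 3 \<le> n" and f: "\<forall>x\<in>{0..1}. \<bar>f x\<bar> \<le> M"
    and V: "\<forall>j\<in>{1..n}. 0 \<le> V j \<and> V j \<le> M"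
  shows "(\<integral>\<xi>. centred_T1_hat_term n f V i \<xi> ^ 2 \<partial>noise_law n) \<le> T1_moment_bound M"
proof -
  interpret prob_space "noise_law n" by (rule prob_space_noise_law)
  have "expectation (\<lambda>\<xi>. centred_T1_hat_term n f V i \<xi> ^ 2) = variance (T1_hat_term n f V i)"
    by (simp add: centred_T1_hat_term_def)
  also have "\<dots> \<le> expectation (\<lambda>\<xi>. T1_hat_term n f V i \<xi> ^ 2)"
    using has_moments_T1_hat_term[OF i]
    by (subst variance_eq) (auto simp: has_moments_integrable has_moments_power)
  also have "\<dots> \<le> T1_moment_bound M"
    by (rule T1_hat_term_second_moment_le[OF i f V])
  finally show ?thesis .
qed

lemma sum_centred_T1_hat_terms_second_moment_le:
  assumes f: "\<forall>x\<in>{0..1}. \<bar>f x\<bar> \<le> M" and V: "\<forall>j\<in>{1..n}. 0 \<le> V j \<and> V j \<le> M"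
  shows "(\<integral>\<xi>. (\<Sum>i = 1..n - 3. centred_T1_hat_term n f V i \<xi>)\<^sup>2 \<partial>noise_law n) \<le> 7 * real n * T1_moment_bound M"
proof -
  interpret prob_space "noise_law n" by (rule prob_space_noise_law)
  have "expectation (\<lambda>\<xi>. (\<Sum>i = 1..n - 3. centred_T1_hat_term n f V i \<xi>)\<^sup>2)
      \<le> real (2 * 4 - 1) * real (card {1..n - 3}) * T1_moment_bound M"
    using f V
    by (intro expectation_square_sum_le_of_uncorrelated_far has_moments_centred_T1_hat_term
        centred_T1_hat_terms_uncorrelated_far centred_T1_hat_term_second_moment_le) auto
  also have "\<dots> \<le> 7 * real n * T1_moment_bound M"
    by (intro mult_right_mono) (auto simp: T1_moment_bound_def)
  finally show ?thesis .
qed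

section \<open>The bias\<close>

lemma holder_class_abs_le: "holder_class \<alpha> M f \<Longrightarrow> x \<in> {0..1} \<Longrightarrow> \<bar>f x\<bar> \<le> M"
  unfolding holder_class_def by force

lemma holder_class_abs_diff_le:
  assumes h: "holder_class \<alpha> M f" and \<alpha>: "0 < \<alpha>" and xy: "x \<in> {0..1}" "y \<in> {0..1}"
  shows "\<bar>f x - f y\<bar> \<le> M * \<bar>x - y\<bar> powr min \<alpha> 1"
proof -
  obtain D where D0: "\<forall>x\<in>{0..1}. D 0 x = f x"
    and D': "\<forall>j < nat \<lfloor>\<alpha>\<rfloor>. \<forall>x\<in>{0..1}. (D j has_real_derivative D (Suc j) x) (at x within {0..1})"
    and bound: "\<forall>j \<le> nat \<lfloor>\<alpha>\<rfloor>. \<forall>x\<in>{0..1}. \<bar>D j x\<bar> \<le> M"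
    and hoelder: "\<forall>x\<in>{0..1}. \<forall>y\<in>{0..1}.
      \<bar>D (nat \<lfloor>\<alpha>\<rfloor>) x - D (nat \<lfloor>\<alpha>\<rfloor>) y\<bar> \<le> M * \<bar>x - y\<bar> powr (\<alpha> - of_int \<lfloor>\<alpha>\<rfloor>)"
    using h unfolding holder_class_def by blast
  show ?thesis
  proof (cases "\<alpha> < 1")
    case True
    then have "\<lfloor>\<alpha>\<rfloor> = 0" using \<alpha> by (simp add: floor_eq_iff)
    then show ?thesis using hoelder D0 xy True by auto
  next
    case False
    then have "0 < nat \<lfloor>\<alpha>\<rfloor>" by simp
    have "norm (D 0 x - D 0 y) \<le> M * norm (x - y)"
    proof (rule field_differentiable_bound[of "{0..1}"])
      show "(D 0 has_field_derivative D (Suc 0) z) (at z within {0..1})" if "z \<in> {0..1}" for z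
        using D' \<open>0 < nat \<lfloor>\<alpha>\<rfloor>\<close> that by blast
      show "norm (D (Suc 0) z) \<le> M" if "z \<in> {0..1}" for z
        using bound \<open>0 < nat \<lfloor>\<alpha>\<rfloor>\<close> that by (simp add: Suc_le_eq)
    qed (use xy in auto)
    then show ?thesis using D0 xy False by simp
  qed
qed

lemma abs_drift_le_holder:
  assumes h: "holder_class \<alpha> M f" and \<alpha>: "0 < \<alpha>" and ik: "i + k \<le> n"
  shows "\<bar>drift n f k i\<bar> \<le> real k * M * real n powr (- min \<alpha> 1)"
proof (cases "n = 0")
  case False
  have M: "0 \<le> M" using holder_class_abs_le[OF h, of 0] by simp
  have "\<bar>drift n f k i\<bar> \<le> M * \<bar>real (i + k) / real n - real i / real n\<bar> powr min \<alpha> 1"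
    unfolding drift_def using ik by (intro holder_class_abs_diff_le[OF h \<alpha>]) (auto simp: divide_le_eq_1)
  also have "\<bar>real (i + k) / real n - real i / real n\<bar> powr min \<alpha> 1 = real k powr min \<alpha> 1 * real n powr (- min \<alpha> 1)"
    by (simp add: diff_divide_distrib[symmetric] powr_divide powr_minus_divide)
  also have "real k powr min \<alpha> 1 \<le> real k"
    using powr_mono[of "min \<alpha> 1" 1 "real k"] by (cases "k = 0") auto
  finally show ?thesis using M by (simp add: mult_left_mono mult_right_mono mult_ac)
qed (use ik in \<open>simp add: drift_def\<close>)

lemma T1_hat_term_bias_le:
  assumes h: "holder_class \<alpha> M f" and \<alpha>: "0 < \<alpha>" and i: "1 \<le> i" "i + 3 \<le> n"
    and V: "\<forall>j\<in>{1..n}. 0 \<le> V j"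
  shows "\<bar>(\<integral>\<xi>. T1_hat_term n f V i \<xi> \<partial>noise_law n) - T1_tilde_term n f V i\<bar>
    \<le> 55 * M ^ 4 * real n powr (- 4 * min \<alpha> 1)"
proof -
  define q where "q = real n powr (- min \<alpha> 1)"
  have q: "0 \<le> q" "q ^ 4 = real n powr (- 4 * min \<alpha> 1)"
    using i by (auto simp: q_def powr_power)
  have "\<bar>drift n f 1 (i + 1)\<bar> \<le> M * q" "\<bar>drift n f 3 i\<bar> \<le> 3 * M * q"
    using abs_drift_le_holder[OF h \<alpha>, of "i + 1" 1 n] abs_drift_le_holder[OF h \<alpha>, of i 3 n] i
    by (simp_all add: q_def)
  then have "drift n f 1 (i + 1) ^ 4 \<le> M ^ 4 * q ^ 4" "drift n f 3 i ^ 4 \<le> 81 * (M ^ 4 * q ^ 4)"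
    using power_mono[of _ _ 4] by (fastforce simp: power_mult_distrib)+
  then have "2/3 * (drift n f 1 (i + 1) ^ 4 + drift n f 3 i ^ 4) \<le> 2/3 * (M ^ 4 * q ^ 4 + 81 * (M ^ 4 * q ^ 4))"
    by (intro mult_left_mono add_mono) auto
  also have "\<dots> \<le> 55 * (M ^ 4 * q ^ 4)"
    by simp
  finally have "2/3 * (drift n f 1 (i + 1) ^ 4 + drift n f 3 i ^ 4) \<le> 55 * (M ^ 4 * q ^ 4)" .
  then show ?thesis
    using expectation_T1_hat_term[OF i V] q by simp
qed

lemma average_T1_hat_term_bias_le:
  assumes n: "1 \<le> n" and h: "holder_class \<alpha> M f" and \<alpha>: "0 < \<alpha>" and V: "\<forall>j\<in>{1..n}. 0 \<le> V j"
  shows "\<bar>(1 / real n) * (\<Sum>i = 1..n - 3. (\<integral>\<xi>. T1_hat_term n f V i \<xi> \<partial>noise_law n) - T1_tilde_term n f V i)\<bar>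
    \<le> 55 * M ^ 4 * real n powr (- 4 * min \<alpha> 1)"
    (is "\<bar>(1 / real n) * ?S\<bar> \<le> ?c")
proof -
  have "\<bar>?S\<bar> \<le> (\<Sum>i = 1..n - 3. ?c)"
    using h \<alpha> V by (intro order.trans[OF sum_abs sum_mono] T1_hat_term_bias_le) auto
  then have "\<bar>(1 / real n) * ?S\<bar> \<le> (1 / real n) * (real (n - 3) * ?c)"
    by (simp add: abs_mult divide_right_mono)
  also have "\<dots> \<le> (1 / real n) * (real n * ?c)"
    by (intro mult_left_mono mult_right_mono) auto
  also have "\<dots> = ?c"
    using n by simp
  finally show ?thesis .
qed

section \<open>The mean squared error\<close>

lemma (in prob_space) expectation_square_add_const_le:
  assumes X: "has_moments M X"
  shows "expectation (\<lambda>\<omega>. (X \<omega> + c)\<^sup>2) \<le> 2 * expectation (\<lambda>\<omega>. X \<omega> ^ 2) + 2 * c\<^sup>2"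
proof -
  have "(x + c)\<^sup>2 \<le> 2 * x\<^sup>2 + 2 * c\<^sup>2" for x
    using sum_squares_bound[of x c] unfolding power2_sum by linarith
  then have "expectation (\<lambda>\<omega>. (X \<omega> + c)\<^sup>2) \<le> expectation (\<lambda>\<omega>. 2 * (X \<omega>)\<^sup>2 + 2 * c\<^sup>2)"
    by (intro integral_mono has_moments_integrable has_moments_add has_moments_mult has_moments_power
        has_moments_const X)
  also have "\<dots> = 2 * expectation (\<lambda>\<omega>. X \<omega> ^ 2) + 2 * c\<^sup>2"
    using X by (simp add: has_moments_integrable has_moments_power prob_space)
  finally show ?thesis .
qed

lemma T1_hat_minus_T1_tilde_eq:
  "T1_hat n f V \<xi> - T1_tilde n f V =
    (1 / real n) * (\<Sum>i = 1..n - 3. centred_T1_hat_term n f V i \<xi>)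
    + (1 / real n) * (\<Sum>i = 1..n - 3. (\<integral>\<xi>. T1_hat_term n f V i \<xi> \<partial>noise_law n) - T1_tilde_term n f V i)"
  by (simp add: T1_hat_eq_sum T1_tilde_eq_sum centred_T1_hat_term_def sum_subtractf algebra_simps)

lemma has_moments_T1_hat: "has_moments (noise_law n) (T1_hat n f V)"
proof -
  interpret prob_space "noise_law n" by (rule prob_space_noise_law)
  show ?thesis
    unfolding T1_hat_eq_sum by (intro has_moments_mult has_moments_const has_moments_sum has_moments_T1_hat_term) auto
qed

lemma mean_square_T1_hat_minus_T1_tilde_le:
  assumes n: "1 \<le> n" and h: "holder_class \<alpha> M f" and \<alpha>: "0 < \<alpha>"
    and V: "\<forall>i\<in>{1..n}. 0 \<le> V i \<and> V i \<le> M"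
  shows "(\<integral>\<xi>. (T1_hat n f V \<xi> - T1_tilde n f V)\<^sup>2 \<partial>noise_law n)
    \<le> 14 * T1_moment_bound M / real n + 6050 * M ^ 8 * real n powr (- 8 * min \<alpha> 1)"
proof -
  interpret prob_space "noise_law n" by (rule prob_space_noise_law)
  let ?I = "{1..n - 3}" and ?p = "real n powr (- 4 * min \<alpha> 1)"
  define X where "X \<xi> = (1 / real n) * (\<Sum>i\<in>?I. centred_T1_hat_term n f V i \<xi>)" for \<xi>
  define B where "B = (1 / real n) * (\<Sum>i\<in>?I. (\<integral>\<xi>. T1_hat_term n f V i \<xi> \<partial>noise_law n) - T1_tilde_term n f V i)"
  have X: "has_moments (noise_law n) X"
    unfolding X_def by (intro has_moments_mult has_moments_const has_moments_sum has_moments_centred_T1_hat_term) auto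
  have "expectation (\<lambda>\<xi>. X \<xi> ^ 2) = (1 / real n)\<^sup>2 * expectation (\<lambda>\<xi>. (\<Sum>i\<in>?I. centred_T1_hat_term n f V i \<xi>)\<^sup>2)"
    unfolding X_def power_mult_distrib by (rule integral_mult_right_zero)
  also have "\<dots> \<le> (1 / real n)\<^sup>2 * (7 * real n * T1_moment_bound M)"
    using holder_class_abs_le[OF h] V by (intro mult_left_mono sum_centred_T1_hat_terms_second_moment_le) auto
  finally have EX: "expectation (\<lambda>\<xi>. X \<xi> ^ 2) \<le> 7 * T1_moment_bound M / real n"
    using n by (simp add: power2_eq_square)
  have "\<bar>B\<bar> \<le> 55 * M ^ 4 * ?p"
    unfolding B_def using average_T1_hat_term_bias_le[OF n h \<alpha>] V by simp
  then have "B\<^sup>2 \<le> (55 * M ^ 4 * ?p)\<^sup>2"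
    by (subst power2_le_iff_abs_le) auto
  also have "\<dots> = 3025 * M ^ 8 * real n powr (- 8 * min \<alpha> 1)"
    using n by (simp add: power_mult_distrib powr_power flip: power_mult)
  finally have B2: "B\<^sup>2 \<le> 3025 * M ^ 8 * real n powr (- 8 * min \<alpha> 1)" .
  have "expectation (\<lambda>\<xi>. (T1_hat n f V \<xi> - T1_tilde n f V)\<^sup>2) = expectation (\<lambda>\<xi>. (X \<xi> + B)\<^sup>2)"
    by (simp add: T1_hat_minus_T1_tilde_eq X_def B_def)
  also have "\<dots> \<le> 2 * expectation (\<lambda>\<xi>. X \<xi> ^ 2) + 2 * B\<^sup>2"
    by (rule expectation_square_add_const_le[OF X])
  finally show ?thesis using EX B2 by simp
qed

lemma powr_min_one_le:
  fixes x c \<alpha> :: real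
  assumes "1 \<le> x" "1 \<le> c"
  shows "x powr (- c * min \<alpha> 1) \<le> 1 / x + x powr (- c * \<alpha>)"
proof (cases "\<alpha> \<le> 1")
  case False
  then have "x powr (- c * min \<alpha> 1) \<le> x powr (- 1)"
    using assms by (intro powr_mono) auto
  then show ?thesis using assms by (simp add: powr_minus_divide add_increasing2)
qed (use assms in simp)

lemma nn_integral_T1_hat_minus_T1_tilde_le:
  assumes n: "1 \<le> n" and h: "holder_class \<alpha> M f" and \<alpha>: "0 < \<alpha>"
    and V: "\<forall>i\<in>{1..n}. 0 \<le> V i \<and> V i \<le> M"
  shows "(\<integral>\<^sup>+ \<xi>. ennreal ((T1_hat n f V \<xi> - T1_tilde n f V)\<^sup>2) \<partial>noise_law n)
    \<le> ennreal ((14 * T1_moment_bound M + 6050 * M ^ 8) * (1 / real n + real n powr (- 8 * \<alpha>)))"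
proof -
  interpret prob_space "noise_law n" by (rule prob_space_noise_law)
  let ?r = "1 / real n + real n powr (- 8 * \<alpha>)"
  have "expectation (\<lambda>\<xi>. (T1_hat n f V \<xi> - T1_tilde n f V)\<^sup>2)
      \<le> 14 * T1_moment_bound M / real n + 6050 * M ^ 8 * real n powr (- 8 * min \<alpha> 1)"
    by (rule mean_square_T1_hat_minus_T1_tilde_le[OF n h \<alpha> V])
  also have "\<dots> \<le> 14 * T1_moment_bound M * ?r + 6050 * M ^ 8 * ?r"
  proof (rule add_mono)
    show "14 * T1_moment_bound M / real n \<le> 14 * T1_moment_bound M * ?r"
      by (simp add: distrib_left T1_moment_bound_def)
    show "6050 * M ^ 8 * real n powr (- 8 * min \<alpha> 1) \<le> 6050 * M ^ 8 * ?r"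
      using powr_min_one_le[of "real n" 8 \<alpha>] n by (intro mult_left_mono) auto
  qed
  finally have "expectation (\<lambda>\<xi>. (T1_hat n f V \<xi> - T1_tilde n f V)\<^sup>2)
      \<le> 14 * T1_moment_bound M * ?r + 6050 * M ^ 8 * ?r" .
  moreover have "integrable (noise_law n) (\<lambda>\<xi>. (T1_hat n f V \<xi> - T1_tilde n f V)\<^sup>2)"
    by (intro has_moments_integrable has_moments_power has_moments_diff has_moments_const has_moments_T1_hat)
  ultimately show ?thesis
    by (subst nn_integral_eq_integral) (auto intro: ennreal_leI simp: distrib_right)
qed

theorem proposition4p4:
  fixes \<alpha> M :: real
  assumes "\<alpha> > 0" and "M > 0"
  shows "\<exists>C > 0. \<forall>(n::nat) (f::real \<Rightarrow> real) (V::nat \<Rightarrow> real).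
           n \<ge> 1 \<longrightarrow> holder_class \<alpha> M f \<longrightarrow> (\<forall>i\<in>{1..n}. 0 \<le> V i \<and> V i \<le> M) \<longrightarrow>
           (\<integral>\<^sup>+ \<xi>. ennreal ((T1_hat n f V \<xi> - T1_tilde n f V)\<^sup>2) \<partial>noise_law n)
             \<le> ennreal (C * (1 / real n + real n powr (- 8 * \<alpha>)))"
proof (intro exI[of _ "14 * T1_moment_bound M + 6050 * M ^ 8"] conjI allI impI)
  show "0 < 14 * T1_moment_bound M + 6050 * M ^ 8"
    using \<open>M > 0\<close> by (simp add: T1_moment_bound_def add_pos_pos)
qed (use nn_integral_T1_hat_minus_T1_tilde_le \<open>\<alpha> > 0\<close> in blast)

end
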